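(* Fix a constant $c\ge1$. There is a constant $c''>0$ depending only on $c$ such that for all integers $n\ge3$, $U\ge3$ with $n/c\le U\le cn$, and all states $a,b$, the original chain $(s_t)$ satisfies $$\mathbb{P}\big(s_{4n}=b\mid s_1=a\big)\ge\frac{1}{c''n},$$ i.e. every entry of $K^{4n-1}$ is at least $\frac{1}{c''n}$, where $K$ is the transition matrix of the original chain.
   Context: Let $n\ge3$ and $U\ge3$ be integers. The "original chain" is the Markov chain on the $2n$ states $\{1,\dots,n,1',\dots,n'\}$ with the following transition probabilities (all unlisted transitions have probability $0$): for $2\le i\le n-1$: $i\to i$ w.p. $1/2$, $i\to i+1$ w.p. $\frac12(1-\frac1U)$, $i\to(i+1)'$ w.p. $\frac1{2U}$; for $2\le i\le n-1$: $i'\to i'$ w.p. $1/2$, $i'\to(i-1)'$ w.p. $\frac12(1-\frac1U)$, $i'\to i-1$ w.p. $\frac1{2U}$; $1\to2$ w.p. $1-\frac1U$, $1\to2'$ w.p. $\frac1U$; $1'\to1$ w.p. $1-\frac1U$, $1'\to1'$ w.p. $\frac1U$; $n\to n'$ w.p. $1-\frac1U$, $n\to n$ w.p. $\frac1U$; $n'\to(n-1)'$ w.p. $1-\frac1U$, $n'\to n-1$ w.p. $\frac1U$. *)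

theory Defs
  imports Complex_Main
begin

text \<open>States of the original chain: (False, i) encodes i, (True, i) encodes i',
  for 1 \<le> i \<le> n.\<close>

definition orig_states :: "nat \<Rightarrow> (bool \<times> nat) set" where
  "orig_states n = UNIV \<times> {1..n}"

definition orig_K :: "nat \<Rightarrow> real \<Rightarrow> bool \<times> nat \<Rightarrow> bool \<times> nat \<Rightarrow> real" where
  "orig_K n U x y =
    (case x of
      (False, i) \<Rightarrow>
        (if i = 1 then
           (if y = (False, 2) then 1 - 1/U else if y = (True, 2) then 1/U else 0)
         else if i = n then
           (if y = (True, n) then 1 - 1/U else if y = (False, n) then 1/U else 0)
         else if 2 \<le> i \<and> i \<le> n - 1 then
           (if y = (False, i) then 1/2
            else if y = (False, i + 1) then (1 - 1/U) / 2
            else if y = (True, i + 1) then 1 / (2 * U) else 0)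
         else 0)
    | (True, i) \<Rightarrow>
        (if i = 1 then
           (if y = (False, 1) then 1 - 1/U else if y = (True, 1) then 1/U else 0)
         else if i = n then
           (if y = (True, n - 1) then 1 - 1/U else if y = (False, n - 1) then 1/U else 0)
         else if 2 \<le> i \<and> i \<le> n - 1 then
           (if y = (True, i) then 1/2
            else if y = (True, i - 1) then (1 - 1/U) / 2
            else if y = (False, i - 1) then 1 / (2 * U) else 0)
         else 0))"

fun orig_Kpow :: "nat \<Rightarrow> real \<Rightarrow> nat \<Rightarrow> bool \<times> nat \<Rightarrow> bool \<times> nat \<Rightarrow> real" where
  "orig_Kpow n U 0 x y = (if x = y then 1 else 0)"
| "orig_Kpow n U (Suc m) x y = (\<Sum>z\<in>orig_states n. orig_K n U x z * orig_Kpow n U m z y)"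

end

theory Submission
  imports Defs
begin

text \<open>Unroll the chain onto a cycle of 2n positions: position p < n stands for
  state p + 1 and position p \<ge> n for state (2n - p)'. Away from the four turning
  positions (the ends of the two lanes) the chain holds with probability 1/2 and
  otherwise advances one position, switching to the mirror position on the other
  lane with probability 1/U. A path making D advances in m steps, B of them forced
  at turning positions, has weight about \<open>q\<^sup>D C(m - B, D - B) / 2\<^sup>m\<^sup>-\<^sup>B\<close> with
  \<open>q = 1 - 1/U\<close>, and B \<le> 16 for paths of at most 4n advances with one switch.
  For small n a single path without switches reaches every target. For large n,
  every D \<ge> n of the right parity admits a switch point after which D advances end
  at the target; summing these one-switch paths over D captures a third of the
  binomial mass and gives \<open>q\<^sup>4\<^sup>n / (3 \<cdot> 4\<^sup>1\<^sup>6 U) \<ge> e\<^sup>-\<^sup>8\<^sup>c / (3 \<cdot> 4\<^sup>1\<^sup>6 c n)\<close>.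
  Targets at turning positions are reached by up to two further forced advances.\<close>

lemma finite_orig_states: "finite (orig_states n)"
  by (simp add: orig_states_def)

lemma if_nonneg: "(P \<Longrightarrow> 0 \<le> (a::real)) \<Longrightarrow> (\<not> P \<Longrightarrow> 0 \<le> b) \<Longrightarrow> 0 \<le> (if P then a else b)"
  by auto

lemma orig_K_nonneg:
  assumes "U \<ge> 1"
  shows "orig_K n U x y \<ge> 0"
proof -
  have f: "0 \<le> 1/U" "0 \<le> 1 - 1/U" "0 \<le> (1 - 1/U)/2" "0 \<le> 1/(2*U)" "0 \<le> (1::real)/2"
    using assms by (auto simp: field_simps)
  obtain b i where x: "x = (b, i)" by fastforce
  show ?thesis unfolding orig_K_def x
    by (cases b; simp only: prod.case bool.case; intro if_nonneg order_refl f)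
qed

lemma orig_Kpow_nonneg:
  assumes "U \<ge> 1"
  shows "orig_Kpow n U m x y \<ge> 0"
proof (induction m arbitrary: x)
  case 0
  then show ?case by simp
next
  case (Suc m)
  show ?case by (simp, intro sum_nonneg mult_nonneg_nonneg orig_K_nonneg[OF assms] Suc)
qed

lemma orig_Kpow_1:
  assumes "y \<in> orig_states n"
  shows "orig_Kpow n U 1 x y = orig_K n U x y"
proof -
  have "orig_Kpow n U 1 x y = (\<Sum>w\<in>orig_states n. if w = y then orig_K n U x w else 0)"
    by (simp, rule sum.cong) auto
  also have "\<dots> = orig_K n U x y"
    using finite_orig_states assms by (simp add: sum.delta')
  finally show ?thesis .
qed

lemma orig_Kpow_add:
  assumes "x \<in> orig_states n"
  shows "orig_Kpow n U (m1 + m2) x y =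
    (\<Sum>z\<in>orig_states n. orig_Kpow n U m1 x z * orig_Kpow n U m2 z y)"
  using assms
proof (induction m1 arbitrary: x)
  case 0
  have "(\<Sum>z\<in>orig_states n. orig_Kpow n U 0 x z * orig_Kpow n U m2 z y)
        = (\<Sum>z\<in>orig_states n. if z = x then orig_Kpow n U m2 z y else 0)"
    by (rule sum.cong) auto
  also have "\<dots> = orig_Kpow n U m2 x y"
    using finite_orig_states 0 by (simp add: sum.delta')
  finally show ?case by simp
next
  case (Suc m1)
  have "orig_Kpow n U (Suc m1 + m2) x y = (\<Sum>w\<in>orig_states n. orig_K n U x w *
      (\<Sum>z\<in>orig_states n. orig_Kpow n U m1 w z * orig_Kpow n U m2 z y))"
    using Suc.IH by simp
  also have "\<dots> = (\<Sum>w\<in>orig_states n. \<Sum>z\<in>orig_states n.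
      orig_K n U x w * orig_Kpow n U m1 w z * orig_Kpow n U m2 z y)"
    by (simp add: sum_distrib_left mult.assoc)
  also have "\<dots> = (\<Sum>z\<in>orig_states n. \<Sum>w\<in>orig_states n.
      orig_K n U x w * orig_Kpow n U m1 w z * orig_Kpow n U m2 z y)"
    by (rule sum.swap)
  also have "\<dots> = (\<Sum>z\<in>orig_states n. orig_Kpow n U (Suc m1) x z * orig_Kpow n U m2 z y)"
    by (simp add: sum_distrib_right)
  finally show ?case .
qed

lemma orig_Kpow_Suc_right_ge:
  assumes "x \<in> orig_states n" "z \<in> orig_states n" "y \<in> orig_states n" "U \<ge> 1"
  shows "orig_Kpow n U m x z * orig_K n U z y \<le> orig_Kpow n U (m + 1) x y"
proof -
  have "0 \<le> orig_Kpow n U m x w * orig_Kpow n U 1 w y" for w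
    using assms(4) by (intro mult_nonneg_nonneg orig_Kpow_nonneg)
  then have "orig_Kpow n U m x z * orig_Kpow n U 1 z y
      \<le> (\<Sum>w\<in>orig_states n. orig_Kpow n U m x w * orig_Kpow n U 1 w y)"
    using assms(2) finite_orig_states by (intro member_le_sum) auto
  also have "\<dots> = orig_Kpow n U (m + 1) x y"
    by (rule orig_Kpow_add[OF assms(1), symmetric])
  finally show ?thesis
    unfolding orig_Kpow_1[OF assms(3)] .
qed

lemma inj_on_add_mod: "inj_on (\<lambda>j. (p + j) mod m) {..<m}" for p m :: nat
proof -
  have eq: "a = b" if "b < m" and le: "a \<le> b" and md: "(p + a) mod m = (p + b) mod m" for a b
  proof -
    have "p + a \<le> p + b" using le by simp
    then obtain s where "p + b = p + a + m * s" by (rule mod_eq_nat2E[OF md])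
    then have b: "b = a + m * s" by simp
    have "s = 0"
    proof (rule ccontr)
      assume "s \<noteq> 0"
      then have "m \<le> m * s" by simp
      then show False using b \<open>b < m\<close> by linarith
    qed
    then show "a = b" using b by simp
  qed
  show ?thesis
  proof
    fix x y assume xy: "x \<in> {..<m}" "y \<in> {..<m}" "(p + x) mod m = (p + y) mod m"
    show "x = y"
    proof (cases "x \<le> y")
      case True
      then show ?thesis using eq[of y x] xy by simp
    next
      case False
      then show ?thesis using eq[of x y] xy by simp
    qed
  qed
qed

locale orig_chain =
  fixes n :: nat and U :: real
  assumes n3: "n \<ge> 3" and U3: "U \<ge> 3"
begin

abbreviation K where "K \<equiv> orig_K n U"

definition q :: real where "q = 1 - 1/U"

definition cyc_state :: "nat \<Rightarrow> bool \<times> nat" where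
  "cyc_state p = (if p mod (2*n) < n then (False, p mod (2*n) + 1) else (True, 2*n - p mod (2*n)))"

definition turning :: "nat \<Rightarrow> bool" where
  "turning p \<longleftrightarrow> p mod (2*n) \<in> {0, n - 1, n, 2*n - 1}"

definition move_prob :: "nat \<Rightarrow> real" where "move_prob p = (if turning p then 1 else 1/2)"

definition hold_prob :: "nat \<Rightarrow> real" where "hold_prob p = (if turning p then 0 else 1/2)"

definition mirror :: "nat \<Rightarrow> nat" where "mirror p = 2*n - 1 - p mod (2*n)"

lemma q_bounds: "2/3 \<le> q" "q \<le> 1"
  using U3 unfolding q_def by (auto simp: field_simps)

lemma q_nonneg: "0 \<le> q"
  using q_bounds by simp

lemma Kpow_nonneg: "orig_Kpow n U m x y \<ge> 0"
  using orig_Kpow_nonneg U3 by simp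

lemma K_fwd_1: "K (False, 1) y = (if y = (False, 2) then q else if y = (True, 2) then 1/U else 0)"
  using n3 unfolding orig_K_def q_def by simp

lemma K_fwd_mid:
  assumes "2 \<le> i" "i \<le> n - 1"
  shows "K (False, i) y = (if y = (False, i) then 1/2 else if y = (False, i + 1) then q / 2
            else if y = (True, i + 1) then 1 / (2 * U) else 0)"
proof -
  have "i \<noteq> 1" "i \<noteq> n" using assms n3 by auto
  then show ?thesis using assms unfolding orig_K_def q_def by simp
qed

lemma K_fwd_n: "K (False, n) y = (if y = (True, n) then q else if y = (False, n) then 1/U else 0)"
  using n3 unfolding orig_K_def q_def by simp

lemma K_bwd_1: "K (True, 1) y = (if y = (False, 1) then q else if y = (True, 1) then 1/U else 0)"
  using n3 unfolding orig_K_def q_def by simp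

lemma K_bwd_mid:
  assumes "2 \<le> i" "i \<le> n - 1"
  shows "K (True, i) y = (if y = (True, i) then 1/2 else if y = (True, i - 1) then q / 2
            else if y = (False, i - 1) then 1 / (2 * U) else 0)"
proof -
  have "i \<noteq> 1" "i \<noteq> n" using assms n3 by auto
  then show ?thesis using assms unfolding orig_K_def q_def by simp
qed

lemma K_bwd_n: "K (True, n) y = (if y = (True, n - 1) then q else if y = (False, n - 1) then 1/U else 0)"
  using n3 unfolding orig_K_def q_def by simp

lemma cyc_state_mod: "cyc_state (p mod (2*n)) = cyc_state p"
  unfolding cyc_state_def by simp

lemma turning_mod: "turning (p mod (2*n)) = turning p"
  unfolding turning_def by simp

lemma cyc_state_in: "cyc_state p \<in> orig_states n"
proof -
  have "p mod (2*n) < 2*n" using n3 by simp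
  then show ?thesis unfolding cyc_state_def orig_states_def by auto
qed

lemma cyc_state_eq_imp_mod_eq: "cyc_state x = cyc_state y \<Longrightarrow> x mod (2*n) = y mod (2*n)"
proof -
  assume "cyc_state x = cyc_state y"
  moreover have "x mod (2*n) < 2*n" "y mod (2*n) < 2*n" using n3 by simp_all
  ultimately show ?thesis unfolding cyc_state_def by (auto split: if_split_asm)
qed

lemma cyc_state_surj:
  assumes "a \<in> orig_states n"
  obtains p where "p < 2*n" "cyc_state p = a"
proof -
  obtain b i where a: "a = (b, i)" "1 \<le> i" "i \<le> n"
    using assms unfolding orig_states_def by auto
  show ?thesis
  proof (cases b)
    case False
    then show ?thesis using a that[of "i - 1"] unfolding cyc_state_def by simp
  next
    case True
    then show ?thesis using a that[of "2*n - i"] unfolding cyc_state_def by simp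
  qed
qed

lemma mirror_less: "x < 2*n \<Longrightarrow> mirror x = 2*n - 1 - x"
  unfolding mirror_def by simp

lemma cyc_state_fwd: "p < n \<Longrightarrow> cyc_state p = (False, p + 1)"
  unfolding cyc_state_def by simp

lemma cyc_state_bwd: "n \<le> p \<Longrightarrow> p < 2*n \<Longrightarrow> cyc_state p = (True, 2*n - p)"
  unfolding cyc_state_def by simp

lemma K_cycle_step_fwd_lane:
  assumes "p < n"
  shows "K (cyc_state p) (cyc_state (p + 1)) = move_prob p * q \<and>
    K (cyc_state p) (cyc_state (mirror (p + 1))) = move_prob p / U \<and>
    (\<not> turning p \<longrightarrow> K (cyc_state p) (cyc_state p) = 1/2)"
proof -
  note st_simps = cyc_state_fwd cyc_state_bwd mirror_less
  have pm: "p mod (2*n) = p" using assms by simp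
  consider "p = 0" | "1 \<le> p \<and> p \<le> n - 2" | "p = n - 1"
    using assms n3 by linarith
  then show ?thesis
  proof cases
    case 1
    have st: "cyc_state p = (False, 1)" "cyc_state (p + 1) = (False, 2)"
      "cyc_state (mirror (p + 1)) = (True, 2)"
      using 1 n3 by (simp_all add: st_simps)
    have "turning p" unfolding turning_def pm using 1 by simp
    then show ?thesis unfolding st K_fwd_1 by (simp add: move_prob_def)
  next
    case 2
    have i: "2 \<le> p + 1" "p + 1 \<le> n - 1" using 2 n3 by linarith+
    have "p + 1 < n" "n \<le> 2*n - 1 - (p + 1)" "2*n - 1 - (p + 1) < 2*n"
      using 2 n3 by linarith+
    then have st: "cyc_state p = (False, p + 1)" "cyc_state (p + 1) = (False, p + 1 + 1)"
      "cyc_state (mirror (p + 1)) = (True, p + 1 + 1)"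
      using assms by (simp_all add: st_simps)
    have "\<not> turning p" using 2 n3 unfolding turning_def pm by auto
    then show ?thesis unfolding st K_fwd_mid[OF i] by (simp add: move_prob_def)
  next
    case 3
    have st: "cyc_state p = (False, n)" "cyc_state (p + 1) = (True, n)"
      "cyc_state (mirror (p + 1)) = (False, n)"
      using 3 n3 by (simp_all add: st_simps)
    have "turning p" unfolding turning_def pm using 3 by simp
    then show ?thesis unfolding st K_fwd_n by (simp add: move_prob_def)
  qed
qed

lemma K_cycle_step_bwd_lane:
  assumes "n \<le> p" "p < 2*n"
  shows "K (cyc_state p) (cyc_state (p + 1)) = move_prob p * q \<and>
    K (cyc_state p) (cyc_state (mirror (p + 1))) = move_prob p / U \<and>
    (\<not> turning p \<longrightarrow> K (cyc_state p) (cyc_state p) = 1/2)"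
proof -
  note st_simps = cyc_state_fwd cyc_state_bwd mirror_less
  have pm: "p mod (2*n) = p" using assms by simp
  consider "p = n" | "n + 1 \<le> p \<and> p \<le> 2*n - 2" | "p = 2*n - 1"
    using assms n3 by linarith
  then show ?thesis
  proof cases
    case 1
    have st: "cyc_state p = (True, n)" "cyc_state (p + 1) = (True, n - 1)"
      "cyc_state (mirror (p + 1)) = (False, n - 1)"
      using 1 n3 by (simp_all add: st_simps)
    have "turning p" unfolding turning_def pm using 1 by simp
    then show ?thesis unfolding st K_bwd_n by (simp add: move_prob_def)
  next
    case 2
    define i where "i = 2*n - p"
    have i: "2 \<le> i" "i \<le> n - 1" using 2 n3 unfolding i_def by linarith+
    have "n \<le> p + 1" "p + 1 < 2*n" "2*n - 1 - (p + 1) < n" "2*n - (p + 1) = i - 1"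
      "2*n - 1 - (p + 1) + 1 = i - 1"
      using 2 n3 unfolding i_def by linarith+
    then have st: "cyc_state p = (True, i)" "cyc_state (p + 1) = (True, i - 1)"
      "cyc_state (mirror (p + 1)) = (False, i - 1)"
      using assms unfolding i_def by (simp_all add: st_simps)
    have "\<not> turning p" using 2 n3 unfolding turning_def pm by auto
    moreover have "i - 1 \<noteq> i" using i by simp
    ultimately show ?thesis unfolding st K_bwd_mid[OF i] by (simp add: move_prob_def)
  next
    case 3
    have st: "cyc_state p = (True, 1)" "cyc_state (p + 1) = (False, 1)"
      "cyc_state (mirror (p + 1)) = (True, 1)"
      using 3 n3 cyc_state_mod[of "2*n"] by (simp_all add: st_simps mirror_def)
    have "turning p" unfolding turning_def pm using 3 by simp
    then show ?thesis unfolding st K_bwd_1 by (simp add: move_prob_def)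
  qed
qed

lemma K_cycle_step:
  "K (cyc_state p) (cyc_state (p + 1)) = move_prob p * q \<and>
    K (cyc_state p) (cyc_state (mirror (p + 1))) = move_prob p / U \<and>
    (\<not> turning p \<longrightarrow> K (cyc_state p) (cyc_state p) = 1/2)"
proof -
  define r where "r = p mod (2*n)"
  have "r < 2*n" using n3 unfolding r_def by simp
  moreover have "cyc_state r = cyc_state p" "turning r = turning p" "move_prob r = move_prob p"
    unfolding r_def cyc_state_mod turning_mod move_prob_def by simp_all
  moreover have "cyc_state (r + 1) = cyc_state (p + 1)" "mirror (r + 1) = mirror (p + 1)"
    unfolding r_def by (metis Suc_eq_plus1 cyc_state_mod mod_Suc_eq, simp add: mirror_def mod_Suc_eq)
  ultimately show ?thesis
    using K_cycle_step_fwd_lane[of r] K_cycle_step_bwd_lane[of r] by (cases "r < n") simp_all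
qed

lemma cyc_state_succ_ne_mirror: "cyc_state (p + 1) \<noteq> cyc_state (mirror (p + 1))"
proof
  define s where "s = (p + 1) mod (2*n)"
  have "s < 2*n" "mirror (p + 1) mod (2*n) = 2*n - 1 - s"
    using n3 unfolding mirror_def s_def by simp_all
  moreover assume "cyc_state (p + 1) = cyc_state (mirror (p + 1))"
  ultimately have "s = 2*n - 1 - s" "s < 2*n" using cyc_state_eq_imp_mod_eq unfolding s_def by metis+
  then show False by presburger
qed

lemma cyc_state_ne_succ_mirror:
  assumes "\<not> turning p"
  shows "cyc_state p \<noteq> cyc_state (p + 1)" "cyc_state p \<noteq> cyc_state (mirror (p + 1))"
proof -
  define r where "r = p mod (2*n)"
  have r: "r < 2*n" "r \<noteq> 0" "r \<noteq> n - 1" "r \<noteq> n" "r \<noteq> 2*n - 1"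
    using assms n3 unfolding turning_def r_def by auto
  then have succ: "(p + 1) mod (2*n) = r + 1" unfolding r_def by (simp add: mod_Suc)
  have mir: "mirror (p + 1) mod (2*n) = 2*n - 2 - r"
    using n3 r succ unfolding mirror_def by simp
  show "cyc_state p \<noteq> cyc_state (p + 1)"
  proof
    assume "cyc_state p = cyc_state (p + 1)"
    then have "r = r + 1" using cyc_state_eq_imp_mod_eq succ unfolding r_def by metis
    then show False by simp
  qed
  show "cyc_state p \<noteq> cyc_state (mirror (p + 1))"
  proof
    assume "cyc_state p = cyc_state (mirror (p + 1))"
    then have "r = 2*n - 2 - r" using cyc_state_eq_imp_mod_eq mir unfolding r_def by metis
    then show False using r by linarith
  qed
qed

lemma orig_Kpow_Suc_cycle_ge:
  "hold_prob p * orig_Kpow n U m (cyc_state p) y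
     + move_prob p * q * orig_Kpow n U m (cyc_state (p + 1)) y
     + move_prob p / U * orig_Kpow n U m (cyc_state (mirror (p + 1))) y
   \<le> orig_Kpow n U (Suc m) (cyc_state p) y"
proof -
  let ?f = "\<lambda>z. K (cyc_state p) z * orig_Kpow n U m z y"
  let ?next = "{cyc_state (p + 1), cyc_state (mirror (p + 1))}"
  have nn: "\<And>z. ?f z \<ge> 0"
    using orig_K_nonneg[of U] U3 Kpow_nonneg by (simp add: mult_nonneg_nonneg)
  have S: "orig_Kpow n U (Suc m) (cyc_state p) y = sum ?f (orig_states n)" by simp
  have Kf: "K (cyc_state p) (cyc_state (p + 1)) = move_prob p * q"
    "K (cyc_state p) (cyc_state (mirror (p + 1))) = move_prob p / U"
    using K_cycle_step by auto
  note d1 = cyc_state_succ_ne_mirror[of p]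
  show ?thesis
  proof (cases "turning p")
    case True
    have "sum ?f ?next \<le> sum ?f (orig_states n)"
      by (rule sum_mono2[OF finite_orig_states]) (use cyc_state_in nn in auto)
    then show ?thesis using True S d1 Kf unfolding hold_prob_def by simp
  next
    case False
    note d23 = cyc_state_ne_succ_mirror[OF False]
    have Kh: "K (cyc_state p) (cyc_state p) = 1/2" using K_cycle_step False by auto
    have "sum ?f (insert (cyc_state p) ?next) \<le> sum ?f (orig_states n)"
      by (rule sum_mono2[OF finite_orig_states]) (use cyc_state_in nn in auto)
    moreover have "sum ?f (insert (cyc_state p) ?next) =
        hold_prob p * orig_Kpow n U m (cyc_state p) y
        + move_prob p * q * orig_Kpow n U m (cyc_state (p + 1)) y
        + move_prob p / U * orig_Kpow n U m (cyc_state (mirror (p + 1))) y"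
      using False d1 d23 Kf Kh unfolding hold_prob_def by simp
    ultimately show ?thesis using S by simp
  qed
qed

definition turns :: "nat \<Rightarrow> nat \<Rightarrow> nat" where
  "turns p l = card {j. j < l \<and> turning (p + j)}"

lemma turns_0 [simp]: "turns p 0 = 0"
  unfolding turns_def by simp

lemma turns_Suc: "turns p (Suc l) = of_bool (turning p) + turns (p + 1) l"
proof -
  have e: "{j. j < Suc l \<and> turning (p + j)} =
      (if turning p then {0} else {}) \<union> Suc ` {j. j < l \<and> turning (p + 1 + j)}"
    by (auto simp: image_iff less_Suc_eq_0_disj)
  have "card (Suc ` {j. j < l \<and> turning (p + 1 + j)}) = card {j. j < l \<and> turning (p + 1 + j)}"
    by (rule card_image) simp
  moreover have "0 \<notin> Suc ` {j. j < l \<and> turning (p + 1 + j)}" by auto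
  ultimately show ?thesis unfolding turns_def e by (auto simp: card_insert_if)
qed

lemma turns_le: "turns p l \<le> l"
proof -
  have "card {j. j < l \<and> turning (p + j)} \<le> card {..<l}" by (intro card_mono) auto
  then show ?thesis unfolding turns_def by simp
qed

lemma turns_mono: "l1 \<le> l2 \<Longrightarrow> turns p l1 \<le> turns p l2"
  unfolding turns_def by (intro card_mono) auto

lemma turns_add: "turns p (l1 + l2) = turns p l1 + turns (p + l1) l2"
proof (induction l1 arbitrary: p)
  case (Suc l1)
  then show ?case by (simp only: add_Suc turns_Suc) (simp add: add.assoc)
qed simp

lemma turns_period_le: "turns p (2*n) \<le> 4"
proof -
  let ?A = "{j. j < 2*n \<and> turning (p + j)}"
  let ?f = "\<lambda>j. (p + j) mod (2*n)"
  have "inj_on ?f ?A"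
    by (rule inj_on_subset[OF inj_on_add_mod]) auto
  then have "card ?A = card (?f ` ?A)" by (simp add: card_image)
  also have "\<dots> \<le> card {0, n - 1, n, 2*n - 1}"
    by (rule card_mono) (auto simp: turning_def)
  also have "\<dots> \<le> 4" using card_length[of "[0, n - 1, n, 2*n - 1]"] by simp
  finally show ?thesis unfolding turns_def .
qed

lemma turns_le_8: "l \<le> 4*n \<Longrightarrow> turns p l \<le> 8"
proof -
  assume "l \<le> 4*n"
  then have "turns p l \<le> turns p (2*n + 2*n)" by (intro turns_mono) simp
  also have "\<dots> = turns p (2*n) + turns (p + 2*n) (2*n)" by (rule turns_add)
  also have "\<dots> \<le> 8" using turns_period_le[of p] turns_period_le[of "p + 2*n"] by simp
  finally show ?thesis .
qed

lemma hold_prob_nonneg: "0 \<le> hold_prob p"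
  unfolding hold_prob_def by simp

lemma move_prob_nonneg: "0 \<le> move_prob p"
  unfolding move_prob_def by simp

end

text \<open>The probability that m steps, B of them forced moves and the others fair coin
  flips between moving and holding, make exactly D moves (when B \<le> D).\<close>

definition lazy_prob :: "nat \<Rightarrow> nat \<Rightarrow> nat \<Rightarrow> real" where
  "lazy_prob m B D = (if D \<le> m then real ((m - B) choose (D - B)) / 2 ^ (m - B) else 0)"

lemma lazy_prob_nonneg: "0 \<le> lazy_prob m B D"
  unfolding lazy_prob_def by simp

lemma lazy_prob_0: "lazy_prob 0 B D = of_bool (D = 0)"
  unfolding lazy_prob_def by simp

lemma lazy_prob_hold: "lazy_prob (Suc m) 0 0 = lazy_prob m 0 0 / 2"
  unfolding lazy_prob_def by simp

lemma lazy_prob_forced: "lazy_prob (Suc m) (Suc B) (Suc D) = lazy_prob m B D"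
  unfolding lazy_prob_def by simp

lemma lazy_prob_fair:
  assumes "B \<le> D"
  shows "lazy_prob (Suc m) B (Suc D) = lazy_prob m B (Suc D) / 2 + lazy_prob m B D / 2"
proof (cases "D \<le> m")
  case True
  have e: "Suc m - B = Suc (m - B)" "Suc D - B = Suc (D - B)" using assms True by auto
  have "\<not> Suc D \<le> m \<Longrightarrow> (m - B choose Suc (D - B)) = 0" using True assms by simp
  then show ?thesis using True unfolding lazy_prob_def e binomial_Suc_Suc by (auto simp: field_simps)
next
  case False
  then show ?thesis unfolding lazy_prob_def by auto
qed

context orig_chain
begin

lemma lazy_prob_step:
  assumes "B \<le> D"
  shows "lazy_prob (Suc m) (of_bool (turning p) + B) (Suc D) =
    hold_prob p * lazy_prob m (of_bool (turning p) + B) (Suc D) + move_prob p * lazy_prob m B D"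
  using lazy_prob_fair[OF assms] lazy_prob_forced by (simp add: hold_prob_def move_prob_def)

end

locale orig_chain_target = orig_chain +
  fixes t :: nat
  assumes t_less: "t < 2*n" and t_not_turning: "\<not> turning t"
begin

text \<open>Weights of the paths from position p to t that make l advances without a
  switch, resp. k advances of which the last is a switch and then l more. Such
  paths may idle at t, which is why t must not be a turning position.\<close>

definition straight_weight :: "nat \<Rightarrow> nat \<Rightarrow> nat \<Rightarrow> real" where
  "straight_weight m p l =
    (if (p + l) mod (2*n) = t then q ^ l * lazy_prob m (turns p l) l else 0)"

definition switch_weight :: "nat \<Rightarrow> nat \<Rightarrow> nat \<Rightarrow> nat \<Rightarrow> real" where
  "switch_weight m p k l =
    (if (mirror (p + k) + l) mod (2*n) = t
     then q ^ (k + l - 1) / U * lazy_prob m (turns p k + turns (mirror (p + k)) l) (k + l)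
     else 0)"

lemma straight_weight_nonneg: "0 \<le> straight_weight m p l"
  unfolding straight_weight_def using q_nonneg lazy_prob_nonneg by simp

lemma switch_weight_nonneg: "0 \<le> switch_weight m p k l"
  unfolding switch_weight_def using q_nonneg lazy_prob_nonneg U3 by simp

lemma straight_weight_Suc_0: "straight_weight (Suc m) p 0 = hold_prob p * straight_weight m p 0"
proof (cases "p mod (2*n) = t")
  case True
  then have "\<not> turning p" using t_not_turning turning_mod[of p] by simp
  then show ?thesis using True unfolding straight_weight_def hold_prob_def by (simp add: lazy_prob_hold)
next
  case False
  then show ?thesis unfolding straight_weight_def by simp
qed

lemma straight_weight_Suc:
  "straight_weight (Suc m) p (Suc l) =
    hold_prob p * straight_weight m p (Suc l) + move_prob p * q * straight_weight m (p + 1) l"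
proof -
  have "p + Suc l = p + 1 + l" by simp
  then show ?thesis
    unfolding straight_weight_def turns_Suc lazy_prob_step[OF turns_le] by (simp add: algebra_simps)
qed

lemma switch_weight_Suc:
  assumes "1 \<le> k"
  shows "switch_weight (Suc m) p (Suc k) l =
    hold_prob p * switch_weight m p (Suc k) l + move_prob p * q * switch_weight m (p + 1) k l"
proof -
  define B where "B = turns (p + 1) k + turns (mirror (p + 1 + k)) l"
  have "B \<le> k + l" unfolding B_def using turns_le by (simp add: add_mono)
  have tw: "turns p (Suc k) + turns (mirror (p + Suc k)) l = of_bool (turning p) + B"
    unfolding B_def turns_Suc by simp
  have "q ^ (Suc k + l - 1) = q * q ^ (k + l - 1)" using assms by (cases k) auto
  then show ?thesis
    unfolding switch_weight_def tw using lazy_prob_step[OF \<open>B \<le> k + l\<close>, of m p]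
    by (simp add: B_def algebra_simps)
qed

lemma switch_weight_Suc_1:
  "switch_weight (Suc m) p 1 l =
    hold_prob p * switch_weight m p 1 l + move_prob p / U * straight_weight m (mirror (p + 1)) l"
proof -
  have tw: "turns p 1 = of_bool (turning p)" using turns_Suc[of p 0] by simp
  show ?thesis
    unfolding switch_weight_def straight_weight_def tw
    using lazy_prob_step[OF turns_le, of m p "mirror (p + 1)" l] by (simp add: algebra_simps)
qed

definition straight_sum :: "nat \<Rightarrow> nat \<Rightarrow> nat \<Rightarrow> real" where
  "straight_sum M m p = (\<Sum>l<M. straight_weight m p l)"

definition switch_sum :: "nat \<Rightarrow> nat \<Rightarrow> nat \<Rightarrow> real" where
  "switch_sum M m p = (\<Sum>k<M. \<Sum>l<M. switch_weight m p (Suc k) l)"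

lemma straight_sum_Suc_le:
  "straight_sum M (Suc m) p \<le> hold_prob p * straight_sum M m p + move_prob p * q * straight_sum M m (p + 1)"
proof (cases M)
  case 0
  then show ?thesis unfolding straight_sum_def by simp
next
  case (Suc M')
  have "straight_sum M (Suc m) p = straight_weight (Suc m) p 0 + (\<Sum>l<M'. straight_weight (Suc m) p (Suc l))"
    unfolding straight_sum_def Suc by (rule sum.lessThan_Suc_shift)
  also have "\<dots> = hold_prob p * (straight_weight m p 0 + (\<Sum>l<M'. straight_weight m p (Suc l)))
      + move_prob p * q * (\<Sum>l<M'. straight_weight m (p + 1) l)"
    by (simp add: straight_weight_Suc_0 straight_weight_Suc sum.distrib sum_distrib_left algebra_simps)
  also have "straight_weight m p 0 + (\<Sum>l<M'. straight_weight m p (Suc l)) = straight_sum M m p"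
    unfolding straight_sum_def Suc by (rule sum.lessThan_Suc_shift[symmetric])
  also have "(\<Sum>l<M'. straight_weight m (p + 1) l) \<le> straight_sum M m (p + 1)"
    unfolding straight_sum_def Suc by (rule sum_mono2) (auto intro: straight_weight_nonneg)
  finally show ?thesis using move_prob_nonneg[of p] q_nonneg by (simp add: mult_left_mono)
qed

lemma switch_sum_Suc_le:
  "switch_sum M (Suc m) p \<le> hold_prob p * switch_sum M m p
    + move_prob p / U * straight_sum M m (mirror (p + 1)) + move_prob p * q * switch_sum M m (p + 1)"
proof (cases M)
  case 0
  then show ?thesis unfolding switch_sum_def straight_sum_def by simp
next
  case (Suc M')
  let ?g = "\<lambda>m p k. \<Sum>l<M. switch_weight m p k l"
  have split: "switch_sum M m' p' = ?g m' p' 1 + (\<Sum>k<M'. ?g m' p' (Suc (Suc k)))" for m' p'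
    unfolding switch_sum_def Suc by (subst sum.lessThan_Suc_shift) simp
  have "?g (Suc m) p 1 = hold_prob p * ?g m p 1 + move_prob p / U * straight_sum M m (mirror (p + 1))"
    unfolding straight_sum_def switch_weight_Suc_1 sum.distrib sum_distrib_left by simp
  moreover have "(\<Sum>k<M'. ?g (Suc m) p (Suc (Suc k))) = hold_prob p * (\<Sum>k<M'. ?g m p (Suc (Suc k)))
      + move_prob p * q * (\<Sum>k<M'. ?g m (p + 1) (Suc k))"
    by (simp add: switch_weight_Suc sum.distrib sum_distrib_left)
  moreover have "(\<Sum>k<M'. ?g m (p + 1) (Suc k)) \<le> switch_sum M m (p + 1)"
    unfolding switch_sum_def Suc
    by (rule sum_mono2) (auto intro!: sum_nonneg switch_weight_nonneg add_nonneg_nonneg)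
  then have "move_prob p * q * (\<Sum>k<M'. ?g m (p + 1) (Suc k)) \<le> move_prob p * q * switch_sum M m (p + 1)"
    using move_prob_nonneg[of p] q_nonneg by (simp add: mult_left_mono)
  ultimately show ?thesis unfolding split[of "Suc m" p] split[of m p] by (simp add: algebra_simps)
qed

lemma cyc_state_target: "p mod (2*n) = t \<Longrightarrow> cyc_state p = cyc_state t"
  using cyc_state_mod[of p] t_less by (metis mod_less)

lemma path_sums_le_orig_Kpow:
  "straight_sum M m p \<le> orig_Kpow n U m (cyc_state p) (cyc_state t) \<and>
   switch_sum M m p \<le> orig_Kpow n U m (cyc_state p) (cyc_state t)"
proof (induction m arbitrary: p)
  case 0
  have "straight_sum M 0 p \<le> (\<Sum>l<M. if l = 0 then of_bool (p mod (2*n) = t) else 0)"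
    unfolding straight_sum_def straight_weight_def lazy_prob_0 by (rule sum_mono) auto
  also have "\<dots> \<le> of_bool (p mod (2*n) = t)" by (simp add: sum.delta)
  also have "\<dots> \<le> orig_Kpow n U 0 (cyc_state p) (cyc_state t)" using cyc_state_target by simp
  finally have "straight_sum M 0 p \<le> orig_Kpow n U 0 (cyc_state p) (cyc_state t)" .
  moreover have "switch_weight 0 p (Suc k) l = 0" for k l
    unfolding switch_weight_def lazy_prob_def by simp
  then have "switch_sum M 0 p = 0"
    unfolding switch_sum_def by simp
  ultimately show ?case using Kpow_nonneg by simp
next
  case (Suc m)
  let ?P = "\<lambda>x. orig_Kpow n U m (cyc_state x) (cyc_state t)"
  have step: "hold_prob p * ?P p + move_prob p * q * ?P (p + 1) + move_prob p / U * ?P (mirror (p + 1))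
      \<le> orig_Kpow n U (Suc m) (cyc_state p) (cyc_state t)"
    by (rule orig_Kpow_Suc_cycle_ge)
  have c: "0 \<le> hold_prob p" "0 \<le> move_prob p * q" "0 \<le> move_prob p / U"
    using hold_prob_nonneg move_prob_nonneg q_nonneg U3 by auto
  have "straight_sum M (Suc m) p \<le> hold_prob p * straight_sum M m p + move_prob p * q * straight_sum M m (p + 1)"
    by (rule straight_sum_Suc_le)
  also have "\<dots> \<le> hold_prob p * ?P p + move_prob p * q * ?P (p + 1)"
    using Suc.IH c by (intro add_mono mult_left_mono) auto
  also have "\<dots> \<le> orig_Kpow n U (Suc m) (cyc_state p) (cyc_state t)"
    using step mult_nonneg_nonneg[OF c(3) Kpow_nonneg[of m "cyc_state (mirror (p + 1))" "cyc_state t"]]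
    by linarith
  finally have "straight_sum M (Suc m) p \<le> orig_Kpow n U (Suc m) (cyc_state p) (cyc_state t)" .
  moreover have "switch_sum M (Suc m) p \<le> hold_prob p * switch_sum M m p
      + move_prob p / U * straight_sum M m (mirror (p + 1)) + move_prob p * q * switch_sum M m (p + 1)"
    by (rule switch_sum_Suc_le)
  moreover have "\<dots> \<le> hold_prob p * ?P p + move_prob p / U * ?P (mirror (p + 1)) + move_prob p * q * ?P (p + 1)"
    using Suc.IH c by (intro add_mono mult_left_mono) auto
  ultimately show ?case using step by simp
qed

end

lemma binomial_shift_ratio_ge:
  assumes "B \<le> D" "m \<le> 8 * (D - B)"
  shows "(1/4)^B * (real (m choose D) / 2^m) \<le> real ((m - B) choose (D - B)) / 2^(m - B)"
  using assms
proof (induction B arbitrary: m D)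
  case 0
  then show ?case by simp
next
  case (Suc B)
  show ?case
  proof (cases m)
    case 0
    then have "m choose D = 0" using Suc.prems(1) by simp
    then show ?thesis by (simp del: binomial_eq_0_iff)
  next
    case (Suc m')
    obtain D' where D: "D = Suc D'" using Suc.prems(1) by (cases D) auto
    have "m' \<le> 8 * (D' - B)" "B \<le> D'" using Suc.prems D \<open>m = Suc m'\<close> by auto
    note IH = Suc.IH[OF \<open>B \<le> D'\<close> this(1)]
    have "real (Suc D') * real (Suc m' choose Suc D') = real (Suc m') * real (m' choose D')"
      by (metis Suc_times_binomial of_nat_mult)
    also have "\<dots> \<le> (8 * real (Suc D')) * real (m' choose D')"
      using Suc.prems D \<open>m = Suc m'\<close> by (intro mult_right_mono) auto
    finally have "real (Suc D') * real (Suc m' choose Suc D') \<le> real (Suc D') * (8 * real (m' choose D'))"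
      by (simp only: ac_simps)
    then have "real (Suc m' choose Suc D') \<le> 8 * real (m' choose D')"
      by (rule mult_left_le_imp_le) simp
    then have "real (m choose D) / 2^m \<le> 4 * (real (m' choose D') / 2^m')"
      using D \<open>m = Suc m'\<close> by (simp add: field_simps)
    then have "(1/4)^(Suc B) * (real (m choose D) / 2^m) \<le> (1/4)^(Suc B) * (4 * (real (m' choose D') / 2^m'))"
      by (intro mult_left_mono) auto
    also have "\<dots> = (1/4)^B * (real (m' choose D') / 2^m')" by simp
    also have "\<dots> \<le> real ((m - Suc B) choose (D - Suc B)) / 2^(m - Suc B)"
      using IH D \<open>m = Suc m'\<close> by simp
    finally show ?thesis .
  qed
qed

lemma choose_double_le:
  assumes "3 * D + 2 \<le> m"
  shows "2 * (m choose D) \<le> m choose Suc D"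
proof -
  have "2 * Suc D \<le> m - D" using assms by simp
  then have "Suc D * (2 * (m choose D)) \<le> (m - D) * (m choose D)"
    by (metis mult.assoc mult.commute mult_le_mono1)
  also have "\<dots> = Suc D * (m choose Suc D)"
    using binomial_absorption[of D m] binomial_absorb_comp[of m D] by simp
  finally show ?thesis by (simp only: Suc_mult_le_cancel1)
qed

lemma sum_choose_below_le:
  assumes "3 * j + 2 \<le> m"
  shows "(\<Sum>D<j. m choose D) \<le> m choose j"
  using assms
proof (induction j)
  case (Suc j)
  have "(\<Sum>D<Suc j. m choose D) \<le> 2 * (m choose j)" using Suc by simp
  also have "\<dots> \<le> m choose Suc j" using Suc.prems by (intro choose_double_le) simp
  finally show ?case .
qed simp

lemma sum_choose_below_le_pow:
  assumes "3 * j + 2 \<le> m" "1 \<le> j"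
  shows "6 * (\<Sum>D<j. m choose D) \<le> 2^m"
proof -
  have "j \<noteq> Suc j" "j \<noteq> m - Suc j" "j \<noteq> m - j" "Suc j \<noteq> m - Suc j" "Suc j \<noteq> m - j"
    "m - Suc j \<noteq> m - j" using assms by auto
  then have "2 * (m choose j) + 2 * (m choose Suc j) = sum (\<lambda>D. m choose D) {j, Suc j, m - Suc j, m - j}"
    using binomial_symmetric[of j m] binomial_symmetric[of "Suc j" m] assms(1) by simp
  also have "\<dots> \<le> sum (\<lambda>D. m choose D) {..m}"
    by (rule sum_mono2) (use assms in auto)
  also have "\<dots> = 2^m" by (rule choose_row_sum)
  finally show ?thesis
    using sum_choose_below_le[OF assms(1)] choose_double_le[of j m] assms(1) by linarith
qed

lemma choose_parity_sum:
  assumes "0 < m"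
  shows "2 * (\<Sum>D\<le>m. if even (D + s) then real (m choose D) else 0) = 2^m"
proof (cases "even s")
  case True
  then have "(\<Sum>D\<le>m. if even (D + s) then real (m choose D) else 0) =
      (\<Sum>D\<le>m. if even D then real (m choose D) else 0)"
    by (intro sum.cong) auto
  then show ?thesis using choose_even_sum[OF assms] by simp
next
  case False
  then have "(\<Sum>D\<le>m. if even (D + s) then real (m choose D) else 0) =
      (\<Sum>D\<le>m. if odd D then real (m choose D) else 0)"
    by (intro sum.cong) auto
  then show ?thesis using choose_odd_sum[OF assms] by simp
qed

lemma choose_parity_window_sum_ge:
  assumes "3 * j + 2 \<le> m" "1 \<le> j"
  shows "2^m / 3 \<le> (\<Sum>D\<in>{D. j \<le> D \<and> D \<le> m \<and> even (D + s)}. real (m choose D))"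
proof -
  let ?f = "\<lambda>D. if even (D + s) then real (m choose D) else 0"
  have "{..m} = {..<j} \<union> {j..m}" using assms by auto
  then have "(\<Sum>D\<le>m. ?f D) = (\<Sum>D<j. ?f D) + (\<Sum>D\<in>{j..m}. ?f D)"
    by (simp add: sum.union_disjoint ivl_disj_int)
  moreover have "(\<Sum>D<j. ?f D) \<le> (\<Sum>D<j. real (m choose D))" by (rule sum_mono) auto
  moreover have "6 * (\<Sum>D<j. real (m choose D)) \<le> 2^m"
    using sum_choose_below_le_pow[OF assms] of_nat_le_iff[where 'a = real]
    by (metis of_nat_mult of_nat_numeral of_nat_power of_nat_sum)
  moreover have "(\<Sum>D\<in>{j..m}. ?f D) = (\<Sum>D\<in>{D. j \<le> D \<and> D \<le> m \<and> even (D + s)}. real (m choose D))"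
    by (rule sum.mono_neutral_cong_right) auto
  moreover have "2 * (\<Sum>D\<le>m. ?f D) = 2^m" using choose_parity_sum assms by simp
  ultimately show ?thesis by linarith
qed

lemma exp_le_one_minus_inverse_power:
  fixes U :: real
  assumes "2 \<le> U"
  shows "exp (- 2 * k / U) \<le> (1 - 1/U) ^ k"
proof -
  define x where "x = 1/U"
  have x: "0 \<le> x" "x \<le> 1/2" using assms unfolding x_def by (auto simp: field_simps)
  have "- x - 2 * x^2 \<le> ln (1 - x)" by (rule ln_one_minus_pos_lower_bound[OF x])
  moreover have "2 * x^2 \<le> x"
    using mult_left_mono[of "2 * x" 1 x] x by (simp add: power2_eq_square)
  ultimately have "- 2 * x \<le> ln (1 - x)" by linarith
  then have "real k * (- 2 * x) \<le> real k * ln (1 - x)" by (rule mult_left_mono) simp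
  then have "exp (real k * (- 2 * x)) \<le> exp (real k * ln (1 - x))" by simp
  also have "\<dots> = (1 - x) ^ k" using x by (simp add: exp_of_nat_mult)
  finally show ?thesis unfolding x_def by (simp add: mult.commute)
qed

context orig_chain
begin

text \<open>Advancing k times, the last time with a switch, and then D - k more times
  from p ends at \<open>2n - 1 - (p + k) + (D - k) \<equiv> D - p - 1 - 2k\<close> modulo 2n, so k
  only has to solve \<open>2k \<equiv> D - p - 1 - t\<close> modulo 2n, which is possible with
  1 \<le> k \<le> n when the right-hand side is even.\<close>

lemma exists_switch_point:
  assumes "n \<le> D" "even (D + p + 1 + t)" "t < 2*n"
  shows "\<exists>k. 1 \<le> k \<and> k \<le> n \<and> (mirror (p + k) + (D - k)) mod (2*n) = t"
proof -
  define X where "X = int D - int p - 1 - int t"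
  have "even X" using assms(2) unfolding X_def by presburger
  then obtain y where y: "X = 2 * y" by (auto elim!: evenE)
  have npos: "(0::int) < int n" using n3 by simp
  define k0 where "k0 = nat (y mod int n)"
  define k where "k = (if k0 = 0 then n else k0)"
  have k0r: "int k0 = y mod int n" unfolding k0_def using npos by simp
  have k0n: "k0 < n" using k0r npos by (metis of_nat_less_iff pos_mod_bound)
  have k1: "1 \<le> k" "k \<le> n" using k0n n3 unfolding k_def by auto
  have dv: "int n dvd (y - int k)"
  proof (cases "k0 = 0")
    case True
    then show ?thesis unfolding k_def using k0r by auto
  next
    case False
    then have "int k = y mod int n" unfolding k_def using k0r by simp
    then show ?thesis by (simp add: mod_eq_dvd_iff[symmetric] mod_diff_eq[symmetric])
  qed
  define r where "r = (p + k) mod (2*n)"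
  have r: "r < 2*n" "int r = int p + int k - 2 * int n * int ((p + k) div (2*n))"
    unfolding r_def using n3 apply simp
    by (metis add_diff_cancel_left' div_mult_mod_eq of_nat_add of_nat_mult of_nat_numeral mult.commute)
  define V where "V = mirror (p + k) + (D - k)"
  have "int V = 2 * int n - 1 - int r + int D - int k"
    unfolding V_def mirror_def r_def[symmetric] using r(1) k1 assms(1) by auto
  then have "int V - int t = 2 * int n * (1 + int ((p + k) div (2*n))) + 2 * (y - int k)"
    using r(2) y unfolding X_def by (simp add: algebra_simps)
  moreover have "2 * int n dvd 2 * (y - int k)" using dv by (rule mult_dvd_mono[OF dvd_refl])
  ultimately have "2 * int n dvd (int V - int t)" by simp
  then have "int V mod (2 * int n) = int t mod (2 * int n)" by (simp add: mod_eq_dvd_iff)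
  then have "int (V mod (2*n)) = int t" using assms(3) by (simp add: zmod_int)
  then show ?thesis using k1 unfolding V_def by (intro exI[of _ k]) simp
qed

end

context orig_chain_target
begin

lemma orig_Kpow_ge_straight_path:
  assumes "2*n \<le> m"
  shows "q^(2*n) / 2^m \<le> orig_Kpow n U m (cyc_state p) (cyc_state t)"
proof -
  define l where "l = (t + 2*n - p mod (2*n)) mod (2*n)"
  have l: "l < 2*n" unfolding l_def using n3 by simp
  have "p mod (2*n) < 2*n" using n3 by simp
  then have "p mod (2*n) + (t + 2*n - p mod (2*n)) = t + 2*n" by simp
  moreover have "(p + l) mod (2*n) = (p mod (2*n) + (t + 2*n - p mod (2*n))) mod (2*n)"
    unfolding l_def by (simp add: mod_add_left_eq mod_add_right_eq)
  ultimately have target: "(p + l) mod (2*n) = t" using t_less by simp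
  define B where "B = turns p l"
  have "B \<le> l" "l \<le> m" unfolding B_def using turns_le l assms by auto
  then have "1 \<le> real ((m - B) choose (l - B))" by (simp add: Suc_le_eq)
  moreover have "(2::real)^(m - B) \<le> 2^m" by (intro power_increasing) auto
  ultimately have "1 / 2^m \<le> real ((m - B) choose (l - B)) / 2^(m - B)"
    by (simp add: frac_le)
  moreover have "q^(2*n) \<le> q^l" using q_bounds l by (intro power_decreasing) auto
  ultimately have "q^(2*n) * (1 / 2^m) \<le> q^l * (real ((m - B) choose (l - B)) / 2^(m - B))"
    using q_nonneg by (intro mult_mono) auto
  also have "\<dots> = straight_weight m p l"
    unfolding straight_weight_def lazy_prob_def B_def using target \<open>l \<le> m\<close> by simp
  also have "\<dots> \<le> straight_sum (2*n) m p"
    unfolding straight_sum_def by (rule member_le_sum) (use l straight_weight_nonneg in auto)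
  also have "\<dots> \<le> orig_Kpow n U m (cyc_state p) (cyc_state t)"
    using path_sums_le_orig_Kpow by blast
  finally show ?thesis by simp
qed

lemma switch_weight_ge:
  assumes "32 \<le> n" "m \<le> 4*n" "1 \<le> k" "k \<le> n" "n \<le> D" "D \<le> m"
    and target: "(mirror (p + k) + (D - k)) mod (2*n) = t"
  shows "q^m / U * (1/4)^16 * (real (m choose D) / 2^m) \<le> switch_weight m p k (D - k)"
proof -
  define B where "B = turns p k + turns (mirror (p + k)) (D - k)"
  have "turns p k \<le> 8" "turns (mirror (p + k)) (D - k) \<le> 8"
    using assms by (simp_all add: turns_le_8)
  then have B16: "B \<le> 16" unfolding B_def by simp
  then have "(1/4::real)^16 * (real (m choose D) / 2^m) \<le> (1/4)^B * (real (m choose D) / 2^m)"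
    by (intro mult_right_mono power_decreasing) auto
  also have "\<dots> \<le> real ((m - B) choose (D - B)) / 2^(m - B)"
    using B16 assms by (intro binomial_shift_ratio_ge) auto
  finally have binom: "(1/4::real)^16 * (real (m choose D) / 2^m) \<le> real ((m - B) choose (D - B)) / 2^(m - B)" .
  have "q^m / U \<le> q^(D - 1) / U"
    using q_bounds U3 assms by (intro divide_right_mono power_decreasing) auto
  then have "q^m / U * ((1/4)^16 * (real (m choose D) / 2^m))
      \<le> q^(D - 1) / U * (real ((m - B) choose (D - B)) / 2^(m - B))"
    using binom q_nonneg U3 by (intro mult_mono) auto
  moreover have "k + (D - k) = D" using assms by simp
  ultimately show ?thesis
    unfolding switch_weight_def lazy_prob_def B_def[symmetric] using target assms by (simp add: mult.assoc)
qed

lemma switch_sum_ge_reindexed: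
  assumes "\<And>D. D \<in> Ds \<Longrightarrow> 1 \<le> kk D \<and> kk D \<le> D \<and> D \<le> m"
  shows "(\<Sum>D\<in>Ds. switch_weight m p (kk D) (D - kk D)) \<le> switch_sum (Suc m) m p"
proof -
  define g where "g x = switch_weight m p (Suc (fst x)) (snd x)" for x
  define \<phi> where "\<phi> D = (kk D - 1, D - kk D)" for D
  have recover: "D = fst (\<phi> D) + snd (\<phi> D) + 1" if "D \<in> Ds" for D
    using assms[OF that] unfolding \<phi>_def by simp
  have "inj_on \<phi> Ds"
    by (rule inj_onI) (metis recover)
  moreover have "\<phi> ` Ds \<subseteq> {..<Suc m} \<times> {..<Suc m}"
    using assms unfolding \<phi>_def by force
  ultimately have "sum g (\<phi> ` Ds) \<le> sum g ({..<Suc m} \<times> {..<Suc m})"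
    by (intro sum_mono2) (auto simp: g_def switch_weight_nonneg)
  also have "sum g (\<phi> ` Ds) = sum (g \<circ> \<phi>) Ds"
    by (rule sum.reindex) fact
  also have "\<dots> = (\<Sum>D\<in>Ds. switch_weight m p (kk D) (D - kk D))"
  proof (rule sum.cong)
    show "(g \<circ> \<phi>) D = switch_weight m p (kk D) (D - kk D)" if "D \<in> Ds" for D
      using assms[OF that] unfolding g_def \<phi>_def by (simp add: Suc_diff_1)
  qed simp
  also have "sum g ({..<Suc m} \<times> {..<Suc m}) = switch_sum (Suc m) m p"
    unfolding switch_sum_def sum.cartesian_product g_def by (simp only: split_def)
  finally show ?thesis .
qed

lemma orig_Kpow_ge_switch_paths:
  assumes "32 \<le> n" "3*n + 2 \<le> m" "m \<le> 4*n"
  shows "q^m / U * (1/4)^16 / 3 \<le> orig_Kpow n U m (cyc_state p) (cyc_state t)"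
proof -
  define Ds where "Ds = {D. n \<le> D \<and> D \<le> m \<and> even (D + (p + 1 + t))}"
  have "\<forall>D\<in>Ds. \<exists>k. 1 \<le> k \<and> k \<le> n \<and> (mirror (p + k) + (D - k)) mod (2*n) = t"
    using exists_switch_point t_less unfolding Ds_def by (simp add: add.assoc)
  from bchoice[OF this] obtain kk
    where kk: "\<forall>D\<in>Ds. 1 \<le> kk D \<and> kk D \<le> n \<and> (mirror (p + kk D) + (D - kk D)) mod (2*n) = t" ..
  let ?c = "q^m / U * (1/4)^16 / 2^m"
  have each: "?c * real (m choose D) \<le> switch_weight m p (kk D) (D - kk D)" if "D \<in> Ds" for D
  proof -
    have "1 \<le> kk D" "kk D \<le> n" "n \<le> D" "D \<le> m"
      "(mirror (p + kk D) + (D - kk D)) mod (2*n) = t"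
      using kk that unfolding Ds_def by auto
    then have "q^m / U * (1/4)^16 * (real (m choose D) / 2^m) \<le> switch_weight m p (kk D) (D - kk D)"
      by (rule switch_weight_ge[OF assms(1,3)])
    then show ?thesis by simp
  qed
  have "0 \<le> ?c" using q_nonneg U3 by simp
  then have "?c * (2^m / 3) \<le> ?c * (\<Sum>D\<in>Ds. real (m choose D))"
    unfolding Ds_def using assms by (intro mult_left_mono choose_parity_window_sum_ge) auto
  also have "\<dots> \<le> (\<Sum>D\<in>Ds. switch_weight m p (kk D) (D - kk D))"
    unfolding sum_distrib_left by (intro sum_mono each)
  also have "\<dots> \<le> switch_sum (Suc m) m p"
    using kk unfolding Ds_def by (intro switch_sum_ge_reindexed) auto
  also have "\<dots> \<le> orig_Kpow n U m (cyc_state p) (cyc_state t)"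
    using path_sums_le_orig_Kpow by blast
  finally show ?thesis by simp
qed

end

context orig_chain
begin

lemma exists_non_turning_before:
  assumes "b < 2*n"
  obtains t j where "t < 2*n" "\<not> turning t" "j \<le> 2" "cyc_state (t + j) = cyc_state b"
proof -
  have "\<exists>t j. t < 2*n \<and> \<not> turning t \<and> j \<le> 2 \<and> (t + j) mod (2*n) = b"
  proof (cases "turning b")
    case False
    then show ?thesis using assms by (intro exI[of _ b] exI[of _ 0]) simp
  next
    case True
    have nt: "\<not> turning (n - 2)" "\<not> turning (2*n - 2)" using n3 unfolding turning_def by auto
    have "b \<in> {0, n - 1, n, 2*n - 1}" using True assms unfolding turning_def by simp
    then consider "b = 0" | "b = n - 1" | "b = n" | "b = 2*n - 1" by blast
    then show ?thesis
    proof cases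
      case 1
      have "2*n - 2 + 2 = 2*n" using n3 by simp
      then have "(2*n - 2 + 2) mod (2*n) = b" using 1 by simp
      then show ?thesis using nt n3 by (intro exI[of _ "2*n - 2"] exI[of _ 2]) simp
    next
      case 2
      have "(n - 2 + 1) mod (2*n) = b" using 2 n3 by simp
      then show ?thesis using nt n3 by (intro exI[of _ "n - 2"] exI[of _ 1]) simp
    next
      case 3
      have "(n - 2 + 2) mod (2*n) = b" using 3 n3 by simp
      then show ?thesis using nt n3 by (intro exI[of _ "n - 2"] exI[of _ 2]) simp
    next
      case 4
      have "(2*n - 2 + 1) mod (2*n) = b" using 4 n3 by simp
      then show ?thesis using nt n3 by (intro exI[of _ "2*n - 2"] exI[of _ 1]) simp
    qed
  qed
  then show thesis using that cyc_state_mod by metis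
qed

lemma orig_Kpow_forward_steps_ge:
  assumes "x \<in> orig_states n"
  shows "orig_Kpow n U m x (cyc_state r) * (q/2)^j \<le> orig_Kpow n U (m + j) x (cyc_state (r + j))"
proof (induction j)
  case (Suc j)
  have "q / 2 \<le> K (cyc_state (r + j)) (cyc_state (r + j + 1))"
    using K_cycle_step q_nonneg unfolding move_prob_def by auto
  then have "orig_Kpow n U m x (cyc_state r) * (q/2)^Suc j
      \<le> orig_Kpow n U (m + j) x (cyc_state (r + j)) * K (cyc_state (r + j)) (cyc_state (r + j + 1))"
    unfolding power_Suc2 mult.assoc[symmetric] using Suc q_nonneg Kpow_nonneg
    by (intro mult_mono) auto
  also have "\<dots> \<le> orig_Kpow n U (m + j + 1) x (cyc_state (r + j + 1))"
    using assms cyc_state_in U3 by (intro orig_Kpow_Suc_right_ge) auto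
  finally show ?case by (simp add: add.assoc)
qed simp

lemma orig_Kpow_ge_via_non_turning:
  assumes "a \<in> orig_states n" "b \<in> orig_states n"
  obtains t j where "t < 2*n" "\<not> turning t" "j \<le> 2"
    "orig_Kpow n U (4*n - 1 - j) a (cyc_state t) / 9 \<le> orig_Kpow n U (4*n - 1) a b"
proof -
  obtain s where s: "s < 2*n" "cyc_state s = b" by (rule cyc_state_surj[OF assms(2)])
  obtain t j where tj: "t < 2*n" "\<not> turning t" "j \<le> 2" "cyc_state (t + j) = cyc_state s"
    by (rule exists_non_turning_before[OF s(1)])
  have "(1/3::real)^2 \<le> (1/3)^j" using tj(3) by (intro power_decreasing) auto
  also have "\<dots> \<le> (q/2)^j" using q_bounds by (intro power_mono) auto
  finally have "1/9 \<le> (q/2)^j" by (simp add: power2_eq_square)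
  from mult_left_mono[OF this Kpow_nonneg[of "4*n - 1 - j" a "cyc_state t"]]
  have "orig_Kpow n U (4*n - 1 - j) a (cyc_state t) / 9
      \<le> orig_Kpow n U (4*n - 1 - j) a (cyc_state t) * (q/2)^j"
    by simp
  also have "\<dots> \<le> orig_Kpow n U (4*n - 1 - j + j) a (cyc_state (t + j))"
    by (rule orig_Kpow_forward_steps_ge[OF assms(1)])
  also have "4*n - 1 - j + j = 4*n - 1" using n3 tj(3) by simp
  finally show thesis using that tj s by simp
qed

lemma orig_Kpow_lower_bound_small:
  assumes "n < 32" "a \<in> orig_states n" "b \<in> orig_states n"
  shows "1 / (9 * 2^128 * (3/2)^64) \<le> orig_Kpow n U (4*n - 1) a b"
proof -
  obtain p where p: "p < 2*n" "cyc_state p = a" by (rule cyc_state_surj[OF assms(2)])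
  obtain t j where tj: "t < 2*n" "\<not> turning t" "j \<le> 2"
    and reach: "orig_Kpow n U (4*n - 1 - j) a (cyc_state t) / 9 \<le> orig_Kpow n U (4*n - 1) a b"
    by (rule orig_Kpow_ge_via_non_turning[OF assms(2,3)])
  interpret orig_chain_target n U t by unfold_locales (use tj n3 U3 in auto)
  have "(2/3::real)^64 \<le> (2/3)^(2*n)" using assms by (intro power_decreasing) auto
  also have "\<dots> \<le> q^(2*n)" using q_bounds by (intro power_mono) auto
  finally have "(2/3)^64 / 2^128 \<le> q^(2*n) / 2^(4*n - 1 - j)"
    using assms by (intro frac_le power_increasing) auto
  also have "\<dots> \<le> orig_Kpow n U (4*n - 1 - j) a (cyc_state t)"
    using orig_Kpow_ge_straight_path[of "4*n - 1 - j" p] p n3 tj by simp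
  finally have "(2/3)^64 / 2^128 / 9 \<le> orig_Kpow n U (4*n - 1) a b"
    using reach by (simp add: divide_right_mono)
  moreover have "1 / (9 * 2^128 * (3/2)^64) = (2/3::real)^64 / 2^128 / 9"
    by (simp add: power_divide)
  ultimately show ?thesis by simp
qed

lemma orig_Kpow_lower_bound_large:
  assumes "32 \<le> n" "real n \<le> c * U" "U \<le> c * real n" "a \<in> orig_states n" "b \<in> orig_states n"
  shows "1 / (27 * 4^16 * c * exp (8*c) * real n) \<le> orig_Kpow n U (4*n - 1) a b"
proof -
  obtain p where p: "p < 2*n" "cyc_state p = a" by (rule cyc_state_surj[OF assms(4)])
  obtain t j where tj: "t < 2*n" "\<not> turning t" "j \<le> 2"
    and reach: "orig_Kpow n U (4*n - 1 - j) a (cyc_state t) / 9 \<le> orig_Kpow n U (4*n - 1) a b"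
    by (rule orig_Kpow_ge_via_non_turning[OF assms(4,5)])
  interpret orig_chain_target n U t by unfold_locales (use tj n3 U3 in auto)
  have "0 < c * U" using assms(1,2) by linarith
  then have "0 < c" using U3 by (simp add: zero_less_mult_iff)
  have "exp (- 8 * c) \<le> exp (- 2 * real (4*n) / U)"
    using assms(2) U3 by (simp add: field_simps)
  also have "\<dots> \<le> q^(4*n)"
    unfolding q_def using U3 by (intro exp_le_one_minus_inverse_power) simp
  also have "\<dots> \<le> q^(4*n - 1 - j)" using q_bounds by (intro power_decreasing) auto
  finally have "exp (- 8 * c) / (c * real n) \<le> q^(4*n - 1 - j) / U"
    using assms(3) U3 \<open>0 < c\<close> q_nonneg by (intro frac_le) auto
  then have "exp (- 8 * c) / (c * real n) * (1/4)^16 / 3 \<le> q^(4*n - 1 - j) / U * (1/4)^16 / 3"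
    by (intro divide_right_mono mult_right_mono) auto
  also have "\<dots> \<le> orig_Kpow n U (4*n - 1 - j) a (cyc_state t)"
    using orig_Kpow_ge_switch_paths[of "4*n - 1 - j" p] assms(1) p tj by simp
  finally have "exp (- 8 * c) / (c * real n) * (1/4)^16 / 3 / 9 \<le> orig_Kpow n U (4*n - 1) a b"
    using reach by (simp add: divide_right_mono)
  moreover have "1 / (27 * 4^16 * c * exp (8*c) * real n) = exp (- 8 * c) / (c * real n) * (1/4)^16 / 3 / 9"
    using \<open>0 < c\<close> assms(1) by (simp add: exp_minus field_simps)
  ultimately show ?thesis by simp
qed

end

definition lower_bound_const :: "real \<Rightarrow> real" where
  "lower_bound_const c = 27 * 4^16 * c * exp (8*c) + 9 * 2^128 * (3/2)^64"

lemma lower_bound_const_pos: "0 < c \<Longrightarrow> 0 < lower_bound_const c"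
  unfolding lower_bound_const_def by (simp add: add_pos_pos)

context orig_chain
begin

lemma orig_Kpow_lower_bound:
  assumes "1 \<le> c" "real n / c \<le> U" "U \<le> c * real n" "a \<in> orig_states n" "b \<in> orig_states n"
  shows "1 / (lower_bound_const c * real n) \<le> orig_Kpow n U (4*n - 1) a b"
proof -
  define A where "A = 27 * 4^16 * c * exp (8*c)"
  define B :: real where "B = 9 * 2^128 * (3/2)^64"
  have pos: "0 < A" "0 < B" "1 \<le> real n" using assms(1) n3 unfolding A_def B_def by auto
  have const: "lower_bound_const c = A + B" unfolding lower_bound_const_def A_def B_def ..
  show ?thesis
  proof (cases "n < 32")
    case True
    have "A + B \<le> (A + B) * real n" using pos by (simp add: mult_le_cancel_left1)
    then have "B \<le> (A + B) * real n" using pos by linarith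
    then have "1 / ((A + B) * real n) \<le> 1 / B" using pos by (intro divide_left_mono) auto
    also have "\<dots> \<le> orig_Kpow n U (4*n - 1) a b"
      using orig_Kpow_lower_bound_small[OF True assms(4,5)] unfolding B_def .
    finally show ?thesis unfolding const .
  next
    case False
    have "real n \<le> c * U" using assms(1,2) by (simp add: field_simps)
    have "1 / ((A + B) * real n) \<le> 1 / (A * real n)" using pos by (intro divide_left_mono) auto
    also have "\<dots> \<le> orig_Kpow n U (4*n - 1) a b"
      using orig_Kpow_lower_bound_large[OF _ \<open>real n \<le> c * U\<close> assms(3-5)] False
      unfolding A_def by (simp add: mult.assoc)
    finally show ?thesis unfolding const .
  qed
qed

end

theorem mainTheorem12:
  fixes c :: real
  assumes "c \<ge> 1"
  shows "\<exists>c''>0. \<forall>n U :: nat. \<forall>a b.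
           n \<ge> 3 \<longrightarrow> U \<ge> 3 \<longrightarrow> real n / c \<le> real U \<longrightarrow> real U \<le> c * real n \<longrightarrow>
           a \<in> orig_states n \<longrightarrow> b \<in> orig_states n \<longrightarrow>
           orig_Kpow n (real U) (4 * n - 1) a b \<ge> 1 / (c'' * real n)"
proof (intro exI[of _ "lower_bound_const c"] conjI allI impI)
  show "0 < lower_bound_const c" using assms by (simp add: lower_bound_const_pos)
next
  fix n U :: nat and a b
  assume "n \<ge> 3" "U \<ge> 3" "real n / c \<le> real U" "real U \<le> c * real n"
    "a \<in> orig_states n" "b \<in> orig_states n"
  then show "1 / (lower_bound_const c * real n) \<le> orig_Kpow n (real U) (4 * n - 1) a b"
    using orig_chain.orig_Kpow_lower_bound[of n U c] assms by (simp add: orig_chain_def)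
qed

end
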